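(* Consider the unconstrained variational inequality problem of finding $x^*\in\mathbb{R}^d$ with $F(x^* )=0$ for a single-valued operator $F:\mathbb{R}^d\to\mathbb{R}^d$, under the following assumptions: (i) the solution set $\mathcal{X}^*$ is non-empty and there exist $x^*\in\mathcal{X}^*$ and $R\in\mathbb{R}$ with $\|x^*\|\le R$; (ii) $F$ is $\lambda$-weak $\mu$-quasi strongly monotone with $\lambda\ge 0$, $\mu>0$, i.e. $\langle F(x),x-x^*\rangle\ge \mu\|x-x^*\|^2-\lambda$ for all $x\in\mathbb{R}^d$ and some $x^*\in\mathcal{X}^*$; (iii) when SEG is run, $F$ is $L$-Lipschitz, and when SGDA is run, $F$ has at most $B$-linear growth, $\|F(x)\|\le B(1+\|x\|)$ for all $x$; (iv) the algorithm accesses a stochastic oracle returning $F_t=F(x_t)+U_t(x_t)$, where $(U_t(\cdot))_{t\ge0}$ are i.i.d. random fields adapted to a filtration $(\mathcal{F}_t)$ with $\mathbb{E}[U_t(x)\mid\mathcal{F}_t]=0$ and $\mathbb{E}[\|U_t(x)\|^2\mid\mathcal{F}_t]\le\sigma^2$ for all $x$; (v) $U_t(x)=U_t^a(x)+U_t^b(x)$ where $U_t^a(x)$ has a Lebesgue density $p_{U_t^a(x)}$ with $\inf_{x\in C}p_{U_t^a(x)}(t)>0$ for every bounded $C\subseteq\mathbb{R}^d$ and every $t\in\mathbb{R}^d$. Let the iterates be generated either by SGDA, $x_{t+1}=x_t-\gamma(F(x_t)+U_t(x_t))$ with $\gamma<\mu/B^2$, or by SEG, $x_{t+1/2}=x_t-\gamma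 F_t$, $x_{t+1}=x_t-\alpha\gamma F_{t+1/2}$ with $\gamma<1/(2\mu+\sqrt{3}L)$ and $\alpha\in(0,1)$. Then the function $V:\mathbb{R}^d\to\mathbb{R}$, $V(x)=\|x-x^*\|^2+1$, satisfies the following geometric drift property for the Markov chain $(x_t)_{t\ge0}$: there exist a measurable set $C$ and constants $\beta>0$, $b<\infty$ such that \[ \Delta V(x)\le -\beta V(x)+b\,\mathbf{1}_C(x)\quad\text{for all }x\in\mathbb{R}^d, \] where $\Delta V(x)=\int_{y\in\mathbb{R}^d}P(x,dy)V(y)-V(x)$ and $P$ is the (time-homogeneous) transition kernel of the chain.
   Context: SGDA = stochastic gradient descent ascent; SEG = stochastic extragradient (double step-size). The transition kernel is $P(x,S)=\Pr[x_{t+1}\in S\mid x_t=x]$. This property is the (V4) geometric drift condition of Meyn and Tweedie. *)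

theory Defs
  imports "HOL-Probability.Probability"
begin

text \<open>Time-homogeneous transition kernel of SGDA: one i.i.d. noise draw per step,
  the noise field at step t is distributed as U under M.\<close>
definition sgda_kernel :: "'w measure \<Rightarrow> ('a::euclidean_space \<Rightarrow> 'a) \<Rightarrow> ('w \<Rightarrow> 'a \<Rightarrow> 'a) \<Rightarrow> real \<Rightarrow> 'a \<Rightarrow> 'a measure"
  where "sgda_kernel M F U \<gamma> x = distr M lborel (\<lambda>\<omega>. x - \<gamma> *\<^sub>R (F x + U \<omega> x))"

text \<open>Transition kernel of SEG (double step size): the oracle is queried at x_t and at
  x_(t+1/2) with two independent draws of the noise field.\<close>
definition seg_kernel :: "'w measure \<Rightarrow> ('a::euclidean_space \<Rightarrow> 'a) \<Rightarrow> ('w \<Rightarrow> 'a \<Rightarrow> 'a) \<Rightarrow> real \<Rightarrow> real \<Rightarrow> 'a \<Rightarrow> 'a measure"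
  where "seg_kernel M F U \<gamma> \<alpha> x = distr (M \<Otimes>\<^sub>M M) lborel
     (\<lambda>(\<omega>1, \<omega>2). let xh = x - \<gamma> *\<^sub>R (F x + U \<omega>1 x)
                  in x - (\<alpha> * \<gamma>) *\<^sub>R (F xh + U \<omega>2 xh))"

definition geometric_drift :: "('a::euclidean_space \<Rightarrow> 'a measure) \<Rightarrow> ('a \<Rightarrow> real) \<Rightarrow> bool"
  where "geometric_drift P V \<longleftrightarrow>
     (\<exists>C \<beta> b. C \<in> sets borel \<and> \<beta> > 0 \<and>
        (\<forall>x. integrable (P x) V \<and>
             (\<integral>y. V y \<partial>P x) - V x \<le> - \<beta> * V x + b * indicator C x))"

end

theory Submission
  imports Defs
begin

text \<open>Write z = x - xs for the distance to the solution xs. Expanding the square of the next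
  distance, the weak quasi-strong monotonicity of F yields a decrease of order -beta |z|^2 up to
  additive constants, while the centered oracle noise only adds its variance. For SGDA the growth
  bound on F keeps the term gamma^2 |F x|^2 below the gain 2 gamma mu |z|^2. For SEG, Lipschitz
  continuity shows that the extrapolated point, where monotonicity is applied, stays at distance at
  least of order (1 - gamma L) |z| from xs, and that F there differs little from the extrapolation
  direction; the relaxation alpha is a convex combination with the current iterate. Hence
  P V <= (1 - beta) V + b everywhere, which is the drift condition with C the whole space.\<close>

lemma nn_integral_le_imp_integrable:
  fixes f :: "'w \<Rightarrow> real"
  assumes f: "f \<in> borel_measurable M" and nonneg: "\<And>\<omega>. 0 \<le> f \<omega>"
    and le: "(\<integral>\<^sup>+\<omega>. ennreal (f \<omega>) \<partial>M) \<le> ennreal c" and c: "0 \<le> c"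
  shows "integrable M f" and "(\<integral>\<omega>. f \<omega> \<partial>M) \<le> c"
proof -
  show "integrable M f"
    using f nonneg order_le_less_trans[OF le ennreal_less_top] by (intro integrableI_nonneg) auto
  have "(\<integral>\<omega>. f \<omega> \<partial>M) = enn2real (\<integral>\<^sup>+\<omega>. ennreal (f \<omega>) \<partial>M)"
    using f nonneg by (intro integral_eq_nn_integral) auto
  also have "\<dots> \<le> c"
    by (rule enn2real_leI[OF c le])
  finally show "(\<integral>\<omega>. f \<omega> \<partial>M) \<le> c" .
qed

lemma distr_not_measurable:
  assumes "prob_space N" and not_meas: "g \<notin> measurable N (lborel :: 'a::euclidean_space measure)"
  shows "distr N lborel g = null_measure lborel"
proof -
  interpret prob_space N by fact
  let ?\<mu> = "\<lambda>A. emeasure N (g -` A \<inter> space N)"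
  have "\<not> measure_space UNIV (sets lborel) ?\<mu>"
  proof
    assume "measure_space UNIV (sets lborel) ?\<mu>"
    then have add: "additive (sets lborel) ?\<mu>"
      unfolding measure_space_def by (intro sets.countably_additive_additive) auto
    have "g -` A \<inter> space N \<in> sets N" if A: "A \<in> sets lborel" for A
    proof (rule ccontr)
      assume A_not: "g -` A \<inter> space N \<notin> sets N"
      have "g -` (- A) \<inter> space N = space N - (g -` A \<inter> space N)" by auto
      with A_not have "g -` (- A) \<inter> space N \<notin> sets N"
        by (metis Diff_Diff_Int Int_absorb1 inf_le2 sets.Diff sets.top)
      with A_not have "?\<mu> A + ?\<mu> (- A) = 0"
        by (simp add: emeasure_notin_sets)
      moreover have "?\<mu> A + ?\<mu> (- A) = ?\<mu> (A \<union> - A)"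
        using add A by (intro additiveD[symmetric]) (auto simp: Compl_eq_Diff_UNIV)
      ultimately show False
        by (simp add: emeasure_space_1)
    qed
    then have "g \<in> measurable N lborel"
      by (intro measurableI) auto
    with not_meas show False by simp
  qed
  moreover have "sigma_sets UNIV (sets borel) = sets (borel :: 'a measure)"
    using sets.sigma_sets_eq[of borel] by simp
  ultimately show ?thesis
    by (intro measure_eqI) (simp_all add: distr_def emeasure_measure_of_conv)
qed

lemma geometric_drift_distrI:
  fixes g :: "'a::euclidean_space \<Rightarrow> 'w \<Rightarrow> 'a"
  assumes N: "prob_space N" and V: "V \<in> borel_measurable borel" "\<And>y. 0 \<le> V y"
    and \<beta>: "0 < \<beta>" and b: "0 \<le> b"
    and bound: "\<And>x. g x \<in> borel_measurable N \<Longrightarrow>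
      (\<integral>\<^sup>+\<omega>. ennreal (V (g x \<omega>)) \<partial>N) \<le> ennreal ((1 - \<beta>) * V x + b)"
  shows "geometric_drift (\<lambda>x. distr N lborel (g x)) V"
  unfolding geometric_drift_def
proof (rule exI[of _ UNIV], rule exI[of _ "min \<beta> 1"], rule exI[of _ b], intro conjI allI)
  fix x
  have rhs_nonneg: "0 \<le> (1 - min \<beta> 1) * V x + b" and
    "(1 - \<beta>) * V x + b \<le> (1 - min \<beta> 1) * V x + b"
    using V(2)[of x] b by (simp_all add: mult_right_mono)
  have "integrable (distr N lborel (g x)) V \<and>
    (\<integral>y. V y \<partial>distr N lborel (g x)) \<le> (1 - min \<beta> 1) * V x + b"
  proof (cases "g x \<in> borel_measurable N")
    case True
    then have "(\<integral>\<^sup>+\<omega>. ennreal (V (g x \<omega>)) \<partial>N) \<le> ennreal ((1 - min \<beta> 1) * V x + b)"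
      using bound \<open>(1 - \<beta>) * V x + b \<le> _\<close> by (blast intro: order_trans ennreal_leI)
    from nn_integral_le_imp_integrable[OF _ _ this rhs_nonneg]
    show ?thesis
      using True V by (simp add: integrable_distr_eq integral_distr)
  next
    case False
    \<comment> \<open>the kernel is then the junk null measure, which integrates V to 0; capping the rate
      at 1 keeps the drift inequality valid for it\<close>
    then show ?thesis
      using N V rhs_nonneg by (simp add: distr_not_measurable)
  qed
  then show "integrable (distr N lborel (g x)) V"
    and "(\<integral>y. V y \<partial>distr N lborel (g x)) - V x \<le> - min \<beta> 1 * V x + b * indicator UNIV x"
    by (auto simp: algebra_simps)
qed (use \<beta> in auto)

definition centered_noise :: "'w measure \<Rightarrow> real \<Rightarrow> ('w \<Rightarrow> 'a::euclidean_space) \<Rightarrow> bool"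
  where "centered_noise M \<sigma> u \<longleftrightarrow> u \<in> borel_measurable M \<and> integrable M u \<and> (\<integral>\<omega>. u \<omega> \<partial>M) = 0
    \<and> (\<integral>\<^sup>+\<omega>. ennreal ((norm (u \<omega>))\<^sup>2) \<partial>M) \<le> ennreal (\<sigma>\<^sup>2)"

lemma power2_norm_add_scaleR:
  fixes a u :: "'a::real_inner"
  shows "(norm (a + c *\<^sub>R u))\<^sup>2 = (norm a)\<^sup>2 + 2 * c * inner a u + c\<^sup>2 * (norm u)\<^sup>2"
  unfolding power2_norm_eq_inner
  by (simp add: inner_commute power2_eq_square algebra_simps)

lemma nn_integral_centered_noise_le:
  fixes u :: "'w \<Rightarrow> 'a::euclidean_space"
  assumes "prob_space M" and noise: "centered_noise M \<sigma> u"
    and d: "0 \<le> d" and nonneg: "\<And>\<omega>. 0 \<le> q + d * (norm (a + c *\<^sub>R u \<omega>))\<^sup>2"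
  shows "(\<integral>\<^sup>+\<omega>. ennreal (q + d * (norm (a + c *\<^sub>R u \<omega>))\<^sup>2) \<partial>M)
    \<le> ennreal (q + d * ((norm a)\<^sup>2 + c\<^sup>2 * \<sigma>\<^sup>2))"
proof -
  interpret prob_space M by fact
  have [measurable]: "u \<in> borel_measurable M" and "integrable M u" and mean: "(\<integral>\<omega>. u \<omega> \<partial>M) = 0"
    and var: "(\<integral>\<^sup>+\<omega>. ennreal ((norm (u \<omega>))\<^sup>2) \<partial>M) \<le> ennreal (\<sigma>\<^sup>2)"
    using noise by (auto simp: centered_noise_def)
  have int_sq: "integrable M (\<lambda>\<omega>. (norm (u \<omega>))\<^sup>2)" and E_sq: "(\<integral>\<omega>. (norm (u \<omega>))\<^sup>2 \<partial>M) \<le> \<sigma>\<^sup>2"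
    using nn_integral_le_imp_integrable[OF _ _ var] by auto
  have expand: "q + d * (norm (a + c *\<^sub>R u \<omega>))\<^sup>2
      = (q + d * (norm a)\<^sup>2) + 2 * d * c * inner a (u \<omega>) + d * c\<^sup>2 * (norm (u \<omega>))\<^sup>2" for \<omega>
    by (simp add: power2_norm_add_scaleR algebra_simps)
  have int: "integrable M (\<lambda>\<omega>. q + d * (norm (a + c *\<^sub>R u \<omega>))\<^sup>2)"
    unfolding expand using \<open>integrable M u\<close> int_sq by auto
  \<comment> \<open>the cross term vanishes because the noise is centered\<close>
  have "(\<integral>\<omega>. q + d * (norm (a + c *\<^sub>R u \<omega>))\<^sup>2 \<partial>M)
      = q + d * ((norm a)\<^sup>2 + c\<^sup>2 * (\<integral>\<omega>. (norm (u \<omega>))\<^sup>2 \<partial>M))"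
    unfolding expand using \<open>integrable M u\<close> int_sq mean by (simp add: prob_space algebra_simps)
  also have "\<dots> \<le> q + d * ((norm a)\<^sup>2 + c\<^sup>2 * \<sigma>\<^sup>2)"
    using E_sq d by (simp add: mult_left_mono)
  finally show ?thesis
    using int nonneg by (simp add: nn_integral_eq_integral ennreal_leI)
qed

lemma nn_integral_centered_noise_second_moment_le:
  fixes u :: "'w \<Rightarrow> 'a::euclidean_space"
  assumes "prob_space M" and "centered_noise M \<sigma> u"
    and "0 \<le> d" and "\<And>\<omega>. 0 \<le> q + d * (norm (u \<omega>))\<^sup>2"
  shows "(\<integral>\<^sup>+\<omega>. ennreal (q + d * (norm (u \<omega>))\<^sup>2) \<partial>M) \<le> ennreal (q + d * \<sigma>\<^sup>2)"
  using nn_integral_centered_noise_le[of M \<sigma> u d q 0 1] assms by simp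

lemma sgda_update_sq_dist_le:
  fixes F :: "'a::real_inner \<Rightarrow> 'a"
  assumes wqsm: "inner (F x) (x - xs) \<ge> \<mu> * (norm (x - xs))\<^sup>2 - lam"
    and growth: "norm (F x) \<le> B * (1 + norm x)" and \<gamma>: "0 \<le> \<gamma>"
  shows "(norm (x - \<gamma> *\<^sub>R F x - xs))\<^sup>2
    \<le> (1 - 2 * \<gamma> * (\<mu> - \<gamma> * B\<^sup>2)) * (norm (x - xs))\<^sup>2 + 2 * \<gamma> * lam + 2 * \<gamma>\<^sup>2 * B\<^sup>2 * (1 + norm xs)\<^sup>2"
proof -
  define z where "z = x - xs"
  have "1 + norm x \<le> norm z + (1 + norm xs)"
    using norm_triangle_ineq[of z xs] by (simp add: z_def)
  then have "(1 + norm x)\<^sup>2 \<le> (norm z + (1 + norm xs))\<^sup>2"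
    by (intro power_mono) auto
  also have "\<dots> \<le> 2 * (norm z)\<^sup>2 + 2 * (1 + norm xs)\<^sup>2"
    using zero_le_power2[of "norm z - (1 + norm xs)"] by (simp add: power2_eq_square algebra_simps)
  finally have "(1 + norm x)\<^sup>2 \<le> 2 * (norm z)\<^sup>2 + 2 * (1 + norm xs)\<^sup>2" .
  moreover have "(norm (F x))\<^sup>2 \<le> B\<^sup>2 * (1 + norm x)\<^sup>2"
    using growth power_mono[OF growth norm_ge_zero] by (simp add: power_mult_distrib)
  ultimately have "(norm (F x))\<^sup>2 \<le> B\<^sup>2 * (2 * (norm z)\<^sup>2 + 2 * (1 + norm xs)\<^sup>2)"
    by (meson order_trans mult_left_mono zero_le_power2)
  then have "\<gamma>\<^sup>2 * (norm (F x))\<^sup>2 \<le> \<gamma>\<^sup>2 * (B\<^sup>2 * (2 * (norm z)\<^sup>2 + 2 * (1 + norm xs)\<^sup>2))"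
    by (simp add: mult_left_mono)
  moreover have "2 * \<gamma> * (\<mu> * (norm z)\<^sup>2 - lam) \<le> 2 * \<gamma> * inner z (F x)"
    using wqsm \<gamma> by (intro mult_left_mono) (auto simp: z_def inner_commute)
  moreover have step: "x - \<gamma> *\<^sub>R F x - xs = z + (- \<gamma>) *\<^sub>R F x"
    by (simp add: z_def)
  have "(norm (x - \<gamma> *\<^sub>R F x - xs))\<^sup>2 = (norm z)\<^sup>2 - 2 * \<gamma> * inner z (F x) + \<gamma>\<^sup>2 * (norm (F x))\<^sup>2"
    unfolding step power2_norm_add_scaleR by simp
  moreover have "(1 - 2 * \<gamma> * (\<mu> - \<gamma> * B\<^sup>2)) * (norm z)\<^sup>2 + 2 * \<gamma> * lam + 2 * \<gamma>\<^sup>2 * B\<^sup>2 * (1 + norm xs)\<^sup>2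
      = (norm z)\<^sup>2 - 2 * \<gamma> * (\<mu> * (norm z)\<^sup>2 - lam) + \<gamma>\<^sup>2 * (B\<^sup>2 * (2 * (norm z)\<^sup>2 + 2 * (1 + norm xs)\<^sup>2))"
    by (simp add: algebra_simps power2_eq_square)
  ultimately show ?thesis
    unfolding z_def by linarith
qed

lemma half_power2_diff_le_power2:
  fixes a b w :: real
  assumes "0 \<le> a" "0 \<le> b" "0 \<le> w" "a - b \<le> w"
  shows "a\<^sup>2 / 2 - b\<^sup>2 \<le> w\<^sup>2"
proof (cases "a \<le> b")
  case True
  then have "a\<^sup>2 \<le> b\<^sup>2"
    using assms by (intro power_mono) auto
  then show ?thesis
    using zero_le_power2[of a] zero_le_power2[of w] by linarith
next
  case False
  then have "(a - b)\<^sup>2 \<le> w\<^sup>2"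
    using assms by (intro power_mono) auto
  moreover have "0 \<le> (a - 2 * b)\<^sup>2 / 2" by simp
  ultimately show ?thesis
    by (simp add: power2_eq_square algebra_simps)
qed

lemma power2_norm_sub_scaleR_le:
  fixes z d :: "'a::real_inner"
  assumes "0 \<le> \<alpha>" "\<alpha> \<le> 1"
  shows "(norm (z - \<alpha> *\<^sub>R d))\<^sup>2 \<le> (1 - \<alpha>) * (norm z)\<^sup>2 + \<alpha> * (norm (z - d))\<^sup>2"
proof -
  have "(1 - \<alpha>) * (norm z)\<^sup>2 + \<alpha> * (norm (z - d))\<^sup>2 - (norm (z - \<alpha> *\<^sub>R d))\<^sup>2
      = \<alpha> * (1 - \<alpha>) * (norm d)\<^sup>2"
    unfolding power2_norm_eq_inner
    by (simp add: inner_commute power2_eq_square algebra_simps)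
  also have "\<dots> \<ge> 0"
    using assms by simp
  finally show ?thesis by simp
qed

lemma seg_extrapolation_dist_ge:
  fixes F :: "'a::real_normed_vector \<Rightarrow> 'a"
  assumes lip: "L-lipschitz_on UNIV F" and Fxs: "F xs = 0" and \<gamma>: "0 \<le> \<gamma>" "\<gamma> * L \<le> 1"
  shows "(1 - \<gamma> * L)\<^sup>2 * (norm (x - xs))\<^sup>2 / 2 - \<gamma>\<^sup>2 * (norm u)\<^sup>2
    \<le> (norm (x - \<gamma> *\<^sub>R (F x + u) - xs))\<^sup>2"
proof -
  define z where "z = x - xs"
  have "norm (F x) \<le> L * norm z"
    using lipschitz_onD[OF lip, of x xs] Fxs by (simp add: z_def dist_norm)
  then have "norm (\<gamma> *\<^sub>R F x) \<le> \<gamma> * L * norm z"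
    using \<gamma> by (simp add: mult_left_mono mult.assoc)
  moreover have split: "z = (x - \<gamma> *\<^sub>R (F x + u) - xs + \<gamma> *\<^sub>R F x) + \<gamma> *\<^sub>R u"
    by (simp add: z_def algebra_simps)
  have "norm z \<le> norm (x - \<gamma> *\<^sub>R (F x + u) - xs) + norm (\<gamma> *\<^sub>R F x) + norm (\<gamma> *\<^sub>R u)"
    unfolding split
    using norm_triangle_ineq[of "x - \<gamma> *\<^sub>R (F x + u) - xs + \<gamma> *\<^sub>R F x" "\<gamma> *\<^sub>R u"]
      norm_triangle_ineq[of "x - \<gamma> *\<^sub>R (F x + u) - xs" "\<gamma> *\<^sub>R F x"]
    by linarith
  ultimately have "(1 - \<gamma> * L) * norm z - \<gamma> * norm u \<le> norm (x - \<gamma> *\<^sub>R (F x + u) - xs)"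
    using \<gamma> by (simp add: algebra_simps)
  then have "((1 - \<gamma> * L) * norm z)\<^sup>2 / 2 - (\<gamma> * norm u)\<^sup>2 \<le> (norm (x - \<gamma> *\<^sub>R (F x + u) - xs))\<^sup>2"
    using \<gamma> by (intro half_power2_diff_le_power2) auto
  then show ?thesis
    by (simp add: z_def power_mult_distrib)
qed

lemma seg_update_sq_dist_le:
  fixes F :: "'a::real_inner \<Rightarrow> 'a"
  assumes lip: "L-lipschitz_on UNIV F" and \<gamma>: "0 \<le> \<gamma>" "3 * (\<gamma> * L)\<^sup>2 \<le> 1"
    and y: "y = x - \<gamma> *\<^sub>R (F x + u)"
  shows "(norm (x - \<gamma> *\<^sub>R F y - xs))\<^sup>2
    \<le> (norm (x - xs))\<^sup>2 - 2 * \<gamma> * inner (F y) (y - xs) + 3 / 2 * \<gamma>\<^sup>2 * (norm u)\<^sup>2"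
proof -
  define v where "v = F x + u"
  have "norm (F x - F y) \<le> \<gamma> * L * norm v"
    using lipschitz_onD[OF lip, of x y] \<gamma> by (simp add: dist_norm y v_def mult_ac)
  then have "norm (v - F y) \<le> \<gamma> * L * norm v + norm u"
    using norm_triangle_ineq[of "F x - F y" u] by (simp add: v_def algebra_simps)
  then have "(norm (v - F y))\<^sup>2 \<le> (\<gamma> * L * norm v + norm u)\<^sup>2"
    by (intro power_mono) auto
  also have "\<dots> \<le> 3 * (\<gamma> * L)\<^sup>2 * (norm v)\<^sup>2 + 3 / 2 * (norm u)\<^sup>2"
    using zero_le_power2[of "\<gamma> * L * norm v - norm u / 2"]
    by (simp add: power2_eq_square algebra_simps)
  also have "\<dots> \<le> (norm v)\<^sup>2 + 3 / 2 * (norm u)\<^sup>2"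
    using \<gamma>(2) mult_right_mono[OF \<gamma>(2), of "(norm v)\<^sup>2"] by simp
  finally have "\<gamma>\<^sup>2 * (norm (v - F y))\<^sup>2 \<le> \<gamma>\<^sup>2 * ((norm v)\<^sup>2 + 3 / 2 * (norm u)\<^sup>2)"
    by (simp add: mult_left_mono)
  moreover have "(norm (x - \<gamma> *\<^sub>R F y - xs))\<^sup>2 = (norm (x - xs))\<^sup>2 - 2 * \<gamma> * inner (F y) (y - xs)
      - \<gamma>\<^sup>2 * (norm v)\<^sup>2 + \<gamma>\<^sup>2 * (norm (v - F y))\<^sup>2"
    unfolding y v_def[symmetric] power2_norm_eq_inner
    by (simp add: inner_commute power2_eq_square algebra_simps)
  ultimately show ?thesis
    by (simp add: algebra_simps)
qed

lemma seg_step_sq_dist_le: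
  fixes F :: "'a::real_inner \<Rightarrow> 'a"
  assumes lip: "L-lipschitz_on UNIV F" and Fxs: "F xs = 0"
    and y: "y = x - \<gamma> *\<^sub>R (F x + u)"
    and wqsm: "inner (F y) (y - xs) \<ge> \<mu> * (norm (y - xs))\<^sup>2 - lam"
    and \<mu>: "0 \<le> \<mu>" and \<gamma>: "0 \<le> \<gamma>" "3 * (\<gamma> * L)\<^sup>2 \<le> 1" and \<alpha>: "0 \<le> \<alpha>" "\<alpha> \<le> 1"
  shows "(norm (x - (\<alpha> * \<gamma>) *\<^sub>R F y - xs))\<^sup>2
    \<le> (1 - \<alpha> * \<gamma> * \<mu> * (1 - \<gamma> * L)\<^sup>2) * (norm (x - xs))\<^sup>2 + 2 * \<alpha> * \<gamma> * lam
      + \<alpha> * (2 * \<gamma> ^ 3 * \<mu> + 3 / 2 * \<gamma>\<^sup>2) * (norm u)\<^sup>2"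
proof -
  define z where "z = x - xs"
  have "(\<gamma> * L)\<^sup>2 \<le> 1\<^sup>2"
    using \<gamma>(2) zero_le_power2[of "\<gamma> * L"] by simp
  then have "\<gamma> * L \<le> 1"
    by (rule power2_le_imp_le) simp
  then have "(1 - \<gamma> * L)\<^sup>2 * (norm z)\<^sup>2 / 2 - \<gamma>\<^sup>2 * (norm u)\<^sup>2 \<le> (norm (y - xs))\<^sup>2"
    unfolding y z_def using seg_extrapolation_dist_ge[OF lip Fxs \<gamma>(1)] by blast
  then have "\<mu> * ((1 - \<gamma> * L)\<^sup>2 * (norm z)\<^sup>2 / 2 - \<gamma>\<^sup>2 * (norm u)\<^sup>2) \<le> \<mu> * (norm (y - xs))\<^sup>2"
    using \<mu> by (rule mult_left_mono)
  with wqsm have "2 * \<gamma> * (\<mu> * ((1 - \<gamma> * L)\<^sup>2 * (norm z)\<^sup>2 / 2 - \<gamma>\<^sup>2 * (norm u)\<^sup>2) - lam)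
      \<le> 2 * \<gamma> * inner (F y) (y - xs)"
    using \<gamma>(1) by (intro mult_left_mono) auto
  moreover have "(norm (z - \<gamma> *\<^sub>R F y))\<^sup>2
      \<le> (norm z)\<^sup>2 - 2 * \<gamma> * inner (F y) (y - xs) + 3 / 2 * \<gamma>\<^sup>2 * (norm u)\<^sup>2"
    using seg_update_sq_dist_le[OF lip \<gamma> y, of xs] by (simp add: z_def algebra_simps)
  moreover have "(norm z)\<^sup>2 - 2 * \<gamma> * (\<mu> * ((1 - \<gamma> * L)\<^sup>2 * (norm z)\<^sup>2 / 2 - \<gamma>\<^sup>2 * (norm u)\<^sup>2) - lam)
      + 3 / 2 * \<gamma>\<^sup>2 * (norm u)\<^sup>2
    = (1 - \<gamma> * \<mu> * (1 - \<gamma> * L)\<^sup>2) * (norm z)\<^sup>2 + 2 * \<gamma> * lam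
      + (2 * \<gamma> ^ 3 * \<mu> + 3 / 2 * \<gamma>\<^sup>2) * (norm u)\<^sup>2"
    by (simp add: field_simps power2_eq_square power3_eq_cube)
  ultimately have "(norm (z - \<gamma> *\<^sub>R F y))\<^sup>2 \<le> (1 - \<gamma> * \<mu> * (1 - \<gamma> * L)\<^sup>2) * (norm z)\<^sup>2
      + 2 * \<gamma> * lam + (2 * \<gamma> ^ 3 * \<mu> + 3 / 2 * \<gamma>\<^sup>2) * (norm u)\<^sup>2"
    by linarith
  then have "\<alpha> * (norm (z - \<gamma> *\<^sub>R F y))\<^sup>2 \<le> \<alpha> * ((1 - \<gamma> * \<mu> * (1 - \<gamma> * L)\<^sup>2) * (norm z)\<^sup>2
      + 2 * \<gamma> * lam + (2 * \<gamma> ^ 3 * \<mu> + 3 / 2 * \<gamma>\<^sup>2) * (norm u)\<^sup>2)"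
    using \<alpha>(1) by (rule mult_left_mono)
  moreover have "(norm (z - \<alpha> *\<^sub>R (\<gamma> *\<^sub>R F y)))\<^sup>2 \<le> (1 - \<alpha>) * (norm z)\<^sup>2 + \<alpha> * (norm (z - \<gamma> *\<^sub>R F y))\<^sup>2"
    using \<alpha> by (rule power2_norm_sub_scaleR_le)
  moreover have "(1 - \<alpha>) * (norm z)\<^sup>2 + \<alpha> * ((1 - \<gamma> * \<mu> * (1 - \<gamma> * L)\<^sup>2) * (norm z)\<^sup>2
      + 2 * \<gamma> * lam + (2 * \<gamma> ^ 3 * \<mu> + 3 / 2 * \<gamma>\<^sup>2) * (norm u)\<^sup>2)
    = (1 - \<alpha> * \<gamma> * \<mu> * (1 - \<gamma> * L)\<^sup>2) * (norm z)\<^sup>2 + 2 * \<alpha> * \<gamma> * lam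
      + \<alpha> * (2 * \<gamma> ^ 3 * \<mu> + 3 / 2 * \<gamma>\<^sup>2) * (norm u)\<^sup>2"
    by (simp add: algebra_simps)
  ultimately have "(norm (z - \<alpha> *\<^sub>R (\<gamma> *\<^sub>R F y)))\<^sup>2
    \<le> (1 - \<alpha> * \<gamma> * \<mu> * (1 - \<gamma> * L)\<^sup>2) * (norm z)\<^sup>2 + 2 * \<alpha> * \<gamma> * lam
      + \<alpha> * (2 * \<gamma> ^ 3 * \<mu> + 3 / 2 * \<gamma>\<^sup>2) * (norm u)\<^sup>2"
    by linarith
  then show ?thesis
    by (simp add: z_def algebra_simps)
qed

theorem sgda_geometric_drift:
  fixes F :: "'a::euclidean_space \<Rightarrow> 'a" and U :: "'w \<Rightarrow> 'a \<Rightarrow> 'a"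
  assumes M: "prob_space M" and noise: "\<And>x. centered_noise M \<sigma> (\<lambda>\<omega>. U \<omega> x)"
    and wqsm: "\<And>x. inner (F x) (x - xs) \<ge> \<mu> * (norm (x - xs))\<^sup>2 - lam"
    and growth: "\<And>x. norm (F x) \<le> B * (1 + norm x)" and \<gamma>: "0 < \<gamma>" "\<gamma> * B\<^sup>2 < \<mu>"
  shows "geometric_drift (sgda_kernel M F U \<gamma>) (\<lambda>x. (norm (x - xs))\<^sup>2 + 1)"
  unfolding sgda_kernel_def[abs_def]
proof (rule geometric_drift_distrI[OF M])
  define \<beta> where "\<beta> = 2 * \<gamma> * (\<mu> - \<gamma> * B\<^sup>2)"
  show "0 < \<beta>"
    using \<gamma> by (simp add: \<beta>_def)
  have "0 \<le> lam"
    using wqsm[of xs] by simp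
  then show "0 \<le> \<beta> + 2 * \<gamma> * lam + 2 * \<gamma>\<^sup>2 * B\<^sup>2 * (1 + norm xs)\<^sup>2 + \<gamma>\<^sup>2 * \<sigma>\<^sup>2"
    using \<gamma> \<open>0 < \<beta>\<close> by simp
  fix x
  define a where "a = x - \<gamma> *\<^sub>R F x - xs"
  have "(\<integral>\<^sup>+\<omega>. ennreal ((norm (x - \<gamma> *\<^sub>R (F x + U \<omega> x) - xs))\<^sup>2 + 1) \<partial>M)
      = (\<integral>\<^sup>+\<omega>. ennreal (1 + 1 * (norm (a + (- \<gamma>) *\<^sub>R U \<omega> x))\<^sup>2) \<partial>M)"
    by (simp add: a_def algebra_simps)
  also have "\<dots> \<le> ennreal (1 + 1 * ((norm a)\<^sup>2 + (- \<gamma>)\<^sup>2 * \<sigma>\<^sup>2))"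
    by (rule nn_integral_centered_noise_le[OF M noise]) auto
  also have "\<dots> \<le> ennreal ((1 - \<beta>) * ((norm (x - xs))\<^sup>2 + 1)
      + (\<beta> + 2 * \<gamma> * lam + 2 * \<gamma>\<^sup>2 * B\<^sup>2 * (1 + norm xs)\<^sup>2 + \<gamma>\<^sup>2 * \<sigma>\<^sup>2))"
    using sgda_update_sq_dist_le[where F = F, OF wqsm growth less_imp_le[OF \<gamma>(1)]]
    by (intro ennreal_leI) (simp add: a_def \<beta>_def algebra_simps)
  finally show "(\<integral>\<^sup>+\<omega>. ennreal ((norm (x - \<gamma> *\<^sub>R (F x + U \<omega> x) - xs))\<^sup>2 + 1) \<partial>M)
      \<le> ennreal ((1 - \<beta>) * ((norm (x - xs))\<^sup>2 + 1)
        + (\<beta> + 2 * \<gamma> * lam + 2 * \<gamma>\<^sup>2 * B\<^sup>2 * (1 + norm xs)\<^sup>2 + \<gamma>\<^sup>2 * \<sigma>\<^sup>2))" .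
qed simp_all

theorem seg_geometric_drift:
  fixes F :: "'a::euclidean_space \<Rightarrow> 'a" and U :: "'w \<Rightarrow> 'a \<Rightarrow> 'a"
  assumes M: "prob_space M" and noise: "\<And>x. centered_noise M \<sigma> (\<lambda>\<omega>. U \<omega> x)"
    and wqsm: "\<And>x. inner (F x) (x - xs) \<ge> \<mu> * (norm (x - xs))\<^sup>2 - lam"
    and Fxs: "F xs = 0" and lip: "L-lipschitz_on UNIV F" and \<mu>: "0 < \<mu>"
    and \<gamma>: "0 < \<gamma>" "3 * (\<gamma> * L)\<^sup>2 \<le> 1" and \<alpha>: "0 < \<alpha>" "\<alpha> \<le> 1"
  shows "geometric_drift (seg_kernel M F U \<gamma> \<alpha>) (\<lambda>x. (norm (x - xs))\<^sup>2 + 1)"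
proof -
  interpret prob_space M by (rule M)
  define y where "y x \<omega> = x - \<gamma> *\<^sub>R (F x + U \<omega> x)" for x \<omega>
  define g where "g x = (\<lambda>(\<omega>1, \<omega>2). x - (\<alpha> * \<gamma>) *\<^sub>R (F (y x \<omega>1) + U \<omega>2 (y x \<omega>1)))" for x
  define \<beta> where "\<beta> = \<alpha> * \<gamma> * \<mu> * (1 - \<gamma> * L)\<^sup>2"
  define D where "D = \<alpha> * (2 * \<gamma> ^ 3 * \<mu> + 3 / 2 * \<gamma>\<^sup>2)"
  define b where "b = \<beta> + 2 * \<alpha> * \<gamma> * lam + (\<alpha> * \<gamma>)\<^sup>2 * \<sigma>\<^sup>2 + D * \<sigma>\<^sup>2"
  have kernel: "seg_kernel M F U \<gamma> \<alpha> = (\<lambda>x. distr (M \<Otimes>\<^sub>M M) lborel (g x))"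
    by (simp add: fun_eq_iff seg_kernel_def g_def y_def Let_def)
  have "(\<gamma> * L)\<^sup>2 < 1\<^sup>2"
    using \<gamma>(2) by simp
  then have "\<gamma> * L < 1"
    by (rule power2_less_imp_less) simp
  then have "0 < \<beta>"
    using \<alpha> \<gamma> \<mu> by (simp add: \<beta>_def)
  have "0 \<le> lam"
    using wqsm[of xs] by simp
  have "0 \<le> D"
    using \<alpha> \<gamma> \<mu> by (simp add: D_def)
  have step: "(norm (x - (\<alpha> * \<gamma>) *\<^sub>R F (y x \<omega>) - xs))\<^sup>2
      \<le> (1 - \<beta>) * (norm (x - xs))\<^sup>2 + 2 * \<alpha> * \<gamma> * lam + D * (norm (U \<omega> x))\<^sup>2" for x \<omega>
    using seg_step_sq_dist_le[where F = F, OF lip Fxs y_def wqsm less_imp_le[OF \<mu>] less_imp_le[OF \<gamma>(1)]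
        \<gamma>(2) less_imp_le[OF \<alpha>(1)] \<alpha>(2)]
    by (simp add: \<beta>_def D_def mult.assoc)
  show ?thesis
    unfolding kernel
  proof (rule geometric_drift_distrI[OF prob_space_pair[OF M M]])
    fix x
    assume [measurable]: "g x \<in> borel_measurable (M \<Otimes>\<^sub>M M)"
    define Q where "Q = (1 - \<beta>) * (norm (x - xs))\<^sup>2 + 2 * \<alpha> * \<gamma> * lam + (\<alpha> * \<gamma>)\<^sup>2 * \<sigma>\<^sup>2 + 1"
    have bound: "(norm (x - (\<alpha> * \<gamma>) *\<^sub>R F (y x \<omega>) - xs))\<^sup>2 + (\<alpha> * \<gamma>)\<^sup>2 * \<sigma>\<^sup>2 + 1
        \<le> Q + D * (norm (U \<omega> x))\<^sup>2" for \<omega>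
      using step[of x \<omega>] by (simp add: Q_def)
    \<comment> \<open>condition on the first noise draw, which fixes the extrapolated point\<close>
    have inner: "(\<integral>\<^sup>+\<omega>2. ennreal ((norm (g x (\<omega>1, \<omega>2) - xs))\<^sup>2 + 1) \<partial>M)
        \<le> ennreal (Q + D * (norm (U \<omega>1 x))\<^sup>2)" for \<omega>1
    proof -
      define a where "a = x - (\<alpha> * \<gamma>) *\<^sub>R F (y x \<omega>1) - xs"
      have "(\<integral>\<^sup>+\<omega>2. ennreal ((norm (g x (\<omega>1, \<omega>2) - xs))\<^sup>2 + 1) \<partial>M)
          = (\<integral>\<^sup>+\<omega>2. ennreal (1 + 1 * (norm (a + (- (\<alpha> * \<gamma>)) *\<^sub>R U \<omega>2 (y x \<omega>1)))\<^sup>2) \<partial>M)"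
        by (simp add: g_def a_def algebra_simps)
      also have "\<dots> \<le> ennreal (1 + 1 * ((norm a)\<^sup>2 + (- (\<alpha> * \<gamma>))\<^sup>2 * \<sigma>\<^sup>2))"
        by (rule nn_integral_centered_noise_le[OF M noise]) auto
      also have "\<dots> \<le> ennreal (Q + D * (norm (U \<omega>1 x))\<^sup>2)"
        using bound[of \<omega>1] by (intro ennreal_leI) (simp add: a_def)
      finally show ?thesis .
    qed
    have "(\<integral>\<^sup>+p. ennreal ((norm (g x p - xs))\<^sup>2 + 1) \<partial>(M \<Otimes>\<^sub>M M))
        = (\<integral>\<^sup>+\<omega>1. \<integral>\<^sup>+\<omega>2. ennreal ((norm (g x (\<omega>1, \<omega>2) - xs))\<^sup>2 + 1) \<partial>M \<partial>M)"
      by (intro nn_integral_fst[symmetric]) measurable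
    also have "\<dots> \<le> (\<integral>\<^sup>+\<omega>1. ennreal (Q + D * (norm (U \<omega>1 x))\<^sup>2) \<partial>M)"
      by (intro nn_integral_mono inner)
    also have "\<dots> \<le> ennreal (Q + D * \<sigma>\<^sup>2)"
      by (intro nn_integral_centered_noise_second_moment_le[OF M noise \<open>0 \<le> D\<close>]
          order_trans[OF _ bound]) simp
    also have "\<dots> = ennreal ((1 - \<beta>) * ((norm (x - xs))\<^sup>2 + 1) + b)"
      by (simp add: Q_def b_def algebra_simps)
    finally show "(\<integral>\<^sup>+p. ennreal ((norm (g x p - xs))\<^sup>2 + 1) \<partial>(M \<Otimes>\<^sub>M M))
        \<le> ennreal ((1 - \<beta>) * ((norm (x - xs))\<^sup>2 + 1) + b)" .
  qed (use \<open>0 < \<beta>\<close> \<open>0 \<le> lam\<close> \<open>0 \<le> D\<close> \<alpha> \<gamma> in \<open>simp_all add: b_def\<close>)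
qed

lemma seg_step_size_le:
  assumes "0 < \<mu>" "0 \<le> L" "0 < \<gamma>" "\<gamma> < 1 / (2 * \<mu> + sqrt 3 * L)"
  shows "3 * (\<gamma> * L)\<^sup>2 \<le> 1"
proof -
  have "\<gamma> * (2 * \<mu> + sqrt 3 * L) < 1"
    using assms by (simp add: field_simps add_pos_nonneg)
  moreover have "\<gamma> * (2 * \<mu> + sqrt 3 * L) = 2 * (\<gamma> * \<mu>) + sqrt 3 * (\<gamma> * L)"
    by (simp add: algebra_simps)
  moreover have "0 < \<gamma> * \<mu>"
    using assms by simp
  ultimately have "sqrt 3 * (\<gamma> * L) < 1"
    by linarith
  then have "(sqrt 3 * (\<gamma> * L))\<^sup>2 \<le> 1\<^sup>2"
    using assms by (intro power_mono) auto
  then show ?thesis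
    by (simp add: power_mult_distrib)
qed

theorem corollary2:
  fixes F :: "'a::euclidean_space \<Rightarrow> 'a"
    and M :: "'w measure"
    and U Ua Ub :: "'w \<Rightarrow> 'a \<Rightarrow> 'a"
    and p :: "'a \<Rightarrow> 'a \<Rightarrow> ennreal"
    and xs :: 'a
    and R lam \<mu> \<sigma> \<gamma> \<alpha> B L :: real
  assumes prob: "prob_space M"
    and sol: "\<exists>x0. F x0 = 0 \<and> norm x0 \<le> R"
    and xs_sol: "F xs = 0"
    and lam: "lam \<ge> 0" and mu: "\<mu> > 0"
    and wqsm: "\<forall>x. inner (F x) (x - xs) \<ge> \<mu> * (norm (x - xs))\<^sup>2 - lam"
    and U_meas: "\<forall>x. (\<lambda>\<omega>. U \<omega> x) \<in> borel_measurable M"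
    and U_int: "\<forall>x. integrable M (\<lambda>\<omega>. U \<omega> x)"
    and U_mean: "\<forall>x. (\<integral>\<omega>. U \<omega> x \<partial>M) = 0"
    and U_var: "\<forall>x. (\<integral>\<^sup>+\<omega>. ennreal ((norm (U \<omega> x))\<^sup>2) \<partial>M) \<le> ennreal (\<sigma>\<^sup>2)"
    and U_split: "\<forall>\<omega> x. U \<omega> x = Ua \<omega> x + Ub \<omega> x"
    and Ua_dens: "\<forall>x. distributed M lborel (\<lambda>\<omega>. Ua \<omega> x) (p x)"
    and Ua_pos: "\<forall>C t. bounded C \<longrightarrow> (INF x\<in>C. p x t) > 0"
  shows "((\<forall>x. norm (F x) \<le> B * (1 + norm x)) \<and> 0 < \<gamma> \<and> \<gamma> < \<mu> / B\<^sup>2 \<longrightarrow>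
            geometric_drift (sgda_kernel M F U \<gamma>) (\<lambda>x. (norm (x - xs))\<^sup>2 + 1))
       \<and> (L-lipschitz_on UNIV F \<and> 0 < \<gamma> \<and> \<gamma> < 1 / (2 * \<mu> + sqrt 3 * L) \<and> 0 < \<alpha> \<and> \<alpha> < 1 \<longrightarrow>
            geometric_drift (seg_kernel M F U \<gamma> \<alpha>) (\<lambda>x. (norm (x - xs))\<^sup>2 + 1))"
proof -
  \<comment> \<open>The solution bound and the decomposition and density of the noise serve the irreducibility
    of the chain in the paper, not its drift.\<close>
  have noise: "\<And>x. centered_noise M \<sigma> (\<lambda>\<omega>. U \<omega> x)"
    using U_meas U_int U_mean U_var by (simp add: centered_noise_def)
  note wqsm = wqsm[rule_format]
  show ?thesis
  proof (intro conjI impI)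
    assume "(\<forall>x. norm (F x) \<le> B * (1 + norm x)) \<and> 0 < \<gamma> \<and> \<gamma> < \<mu> / B\<^sup>2"
    \<comment> \<open>B = 0 is excluded since then the junk value \<mu> / 0 = 0 bounds \<gamma>\<close>
    then have "\<And>x. norm (F x) \<le> B * (1 + norm x)" and "0 < \<gamma>" "\<gamma> * B\<^sup>2 < \<mu>"
      by (auto simp: less_divide_eq split: if_splits)
    then show "geometric_drift (sgda_kernel M F U \<gamma>) (\<lambda>x. (norm (x - xs))\<^sup>2 + 1)"
      by (rule sgda_geometric_drift[OF prob noise wqsm])
  next
    assume "L-lipschitz_on UNIV F \<and> 0 < \<gamma> \<and> \<gamma> < 1 / (2 * \<mu> + sqrt 3 * L) \<and> 0 < \<alpha> \<and> \<alpha> < 1"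
    then have lip: "L-lipschitz_on UNIV F" and \<gamma>: "0 < \<gamma>" "3 * (\<gamma> * L)\<^sup>2 \<le> 1"
      and \<alpha>: "0 < \<alpha>" "\<alpha> \<le> 1"
      using seg_step_size_le[OF mu lipschitz_on_nonneg] by auto
    show "geometric_drift (seg_kernel M F U \<gamma> \<alpha>) (\<lambda>x. (norm (x - xs))\<^sup>2 + 1)"
      by (rule seg_geometric_drift[OF prob noise wqsm xs_sol lip mu \<gamma> \<alpha>])
  qed
qed

end
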